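(* Let $G=(V,E)$ be an atomic bispanning graph, $v\in V$ of degree $3$ with neighbours $x,y,z$ and incident edges $e_x,e_y,e_z$, let $(a,b)\in\{(x,y),(x,z),(y,z)\}$, $c$ the remaining neighbour, and $G_{a,b}$ the reduction graph. If $(f,e_{a,b},S,T)$ is an arc of $\vec\tau_3(G_{a,b})$, then there exists $e_2\in\{e_a,e_b\}$ such that (i) $(f,e_2,\rho_{e_{a,b},c}(S,T))$ is an arc of $\vec\tau_3(G)$, and (ii) $(e_2,f,S',T')$ is an arc of $\vec\tau_3(G)$, where $(S',T')\in V_{\tau(G)}$ is the head of the arc in (i).
   Context: Graphs are finite, undirected, possibly with parallel edges, no loops; $X+a=X\cup\{a\}$, $X-a=X\setminus\{a\}$. A spanning tree is $T\subseteq E$ with $(V,T)$ connected and acyclic; bispanning means $E$ is the union of two disjoint spanning trees; atomic means the only bispanning subgraphs are the graph itself and single vertices. For a spanning tree $T$ of a graph $H$ and $e\notin T$, $C_H(T,e)$ is the edge set of the unique cycle in $T+e$; for $e\in T$, $D_H(T,e)$ is the set of edges of $H$ with one end in each component of $(V(H),T-e)$. For disjoint spanning trees $S,T$ covering all edges of $H$: $(e,f)$ with $e\in S,f\in T$ and $D_H(S,e)\cap C_H(T,e)=\{e,f\}$ is a unique $S$ edge exchange; $(e,f)$ with $e\in T,f\in S$ and $D_H(T,e)\cap C_H(S,e)=\{e,f\}$ is a unique $T$ edge exchange. $\vec\tau_3(H)$: vertex set $V_{\tau(H)}$ of ordered pairs $(S,T)$ of disjoint spanning trees covering all edges; an arc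 $(e,f,S,T)$ from $(S,T)$ to $(S-e+f,T+e-f)$ for each unique $S$ edge exchange and to $(S+e-f,T-e+f)$ for each unique $T$ edge exchange; $(e,f,P)$ with $P=(S,T)$ denotes $(e,f,S,T)$. The edge $e_w$ joins $v$ and $w$. The reduction graph $G_{a,b}$ has vertex set $V-v$ and edge set $E-e_x-e_y-e_z+e_{a,b}$, $e_{a,b}$ a new edge with ends $a,b$. $\rho_{e_{a,b},c}(S,T)=(S-e_{a,b}+e_a+e_b,T+e_c)$ if $e_{a,b}\in S$ and $=(S+e_c,T-e_{a,b}+e_a+e_b)$ if $e_{a,b}\in T$. *)

theory Defs
  imports Main
begin

text \<open>A (multi)graph is given by a vertex set V, an edge set E and an incidence
  function ends; parallel edges are allowed, loops are excluded (card (ends e) = 2).\<close>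

definition mgraph :: "'v set \<Rightarrow> 'e set \<Rightarrow> ('e \<Rightarrow> 'v set) \<Rightarrow> bool" where
  "mgraph V E ends \<longleftrightarrow> finite V \<and> finite E \<and> (\<forall>e\<in>E. ends e \<subseteq> V \<and> card (ends e) = 2)"

definition adj_rel :: "('e \<Rightarrow> 'v set) \<Rightarrow> 'e set \<Rightarrow> ('v \<times> 'v) set" where
  "adj_rel ends F = {(p, q). \<exists>e\<in>F. ends e = {p, q}}"

definition connected_on :: "'v set \<Rightarrow> 'e set \<Rightarrow> ('e \<Rightarrow> 'v set) \<Rightarrow> bool" where
  "connected_on V F ends \<longleftrightarrow> V \<noteq> {} \<and> (\<forall>u\<in>V. \<forall>w\<in>V. (u, w) \<in> (adj_rel ends F)\<^sup>*)"

definition is_cycle :: "('e \<Rightarrow> 'v set) \<Rightarrow> 'e set \<Rightarrow> bool" where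
  "is_cycle ends C \<longleftrightarrow> (\<exists>vs es. length vs = length es \<and> es \<noteq> [] \<and> distinct vs \<and> distinct es
      \<and> set es = C \<and> (\<forall>i<length es. ends (es ! i) = {vs ! i, vs ! ((i + 1) mod length vs)}))"

definition acyclic_edges :: "('e \<Rightarrow> 'v set) \<Rightarrow> 'e set \<Rightarrow> bool" where
  "acyclic_edges ends F \<longleftrightarrow> \<not> (\<exists>C \<subseteq> F. is_cycle ends C)"

definition spanning_tree :: "'v set \<Rightarrow> 'e set \<Rightarrow> ('e \<Rightarrow> 'v set) \<Rightarrow> 'e set \<Rightarrow> bool" where
  "spanning_tree V E ends T \<longleftrightarrow> T \<subseteq> E \<and> connected_on V T ends \<and> acyclic_edges ends T"

definition bispanning :: "'v set \<Rightarrow> 'e set \<Rightarrow> ('e \<Rightarrow> 'v set) \<Rightarrow> bool" where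
  "bispanning V E ends \<longleftrightarrow> (\<exists>S T. spanning_tree V E ends S \<and> spanning_tree V E ends T
      \<and> S \<inter> T = {} \<and> S \<union> T = E)"

definition subgraph :: "'v set \<Rightarrow> 'e set \<Rightarrow> 'v set \<Rightarrow> 'e set \<Rightarrow> ('e \<Rightarrow> 'v set) \<Rightarrow> bool" where
  "subgraph V' E' V E ends \<longleftrightarrow> V' \<subseteq> V \<and> E' \<subseteq> E \<and> (\<forall>e\<in>E'. ends e \<subseteq> V')"

definition atomic :: "'v set \<Rightarrow> 'e set \<Rightarrow> ('e \<Rightarrow> 'v set) \<Rightarrow> bool" where
  "atomic V E ends \<longleftrightarrow> (\<forall>V' E'. subgraph V' E' V E ends \<and> bispanning V' E' ends \<longrightarrow>
      (V' = V \<and> E' = E) \<or> (\<exists>u. V' = {u} \<and> E' = {}))"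

text \<open>C_H(T,e): the edge set of the unique cycle in T+e (for e not in T).\<close>
definition fund_cycle :: "('e \<Rightarrow> 'v set) \<Rightarrow> 'e set \<Rightarrow> 'e \<Rightarrow> 'e set" where
  "fund_cycle ends T e = (THE C. C \<subseteq> insert e T \<and> is_cycle ends C)"

text \<open>D_H(T,e): edges of H with one end in each of the two components of (V, T-e),
  i.e. the components containing the two ends of e.\<close>
definition fund_cut :: "'e set \<Rightarrow> ('e \<Rightarrow> 'v set) \<Rightarrow> 'e set \<Rightarrow> 'e \<Rightarrow> 'e set" where
  "fund_cut E ends T e = {f \<in> E. \<exists>u w p q. ends e = {u, w} \<and> ends f = {p, q}
      \<and> (p, u) \<in> (adj_rel ends (T - {e}))\<^sup>* \<and> (q, w) \<in> (adj_rel ends (T - {e}))\<^sup>*}"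

definition tau_vertices :: "'v set \<Rightarrow> 'e set \<Rightarrow> ('e \<Rightarrow> 'v set) \<Rightarrow> ('e set \<times> 'e set) set" where
  "tau_vertices V E ends = {(S, T). spanning_tree V E ends S \<and> spanning_tree V E ends T
      \<and> S \<inter> T = {} \<and> S \<union> T = E}"

definition unique_S_exchange :: "'e set \<Rightarrow> ('e \<Rightarrow> 'v set) \<Rightarrow> 'e set \<Rightarrow> 'e set \<Rightarrow> 'e \<Rightarrow> 'e \<Rightarrow> bool" where
  "unique_S_exchange E ends S T e f \<longleftrightarrow> e \<in> S \<and> f \<in> T \<and> fund_cut E ends S e \<inter> fund_cycle ends T e = {e, f}"

definition unique_T_exchange :: "'e set \<Rightarrow> ('e \<Rightarrow> 'v set) \<Rightarrow> 'e set \<Rightarrow> 'e set \<Rightarrow> 'e \<Rightarrow> 'e \<Rightarrow> bool" where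
  "unique_T_exchange E ends S T e f \<longleftrightarrow> e \<in> T \<and> f \<in> S \<and> fund_cut E ends T e \<inter> fund_cycle ends S e = {e, f}"

definition tau3_arc :: "'v set \<Rightarrow> 'e set \<Rightarrow> ('e \<Rightarrow> 'v set) \<Rightarrow> 'e \<Rightarrow> 'e \<Rightarrow> 'e set \<Rightarrow> 'e set \<Rightarrow> bool" where
  "tau3_arc V E ends e f S T \<longleftrightarrow> (S, T) \<in> tau_vertices V E ends
      \<and> (unique_S_exchange E ends S T e f \<or> unique_T_exchange E ends S T e f)"

definition arc_head :: "'e \<Rightarrow> 'e \<Rightarrow> 'e set \<Rightarrow> 'e set \<Rightarrow> 'e set \<times> 'e set" where
  "arc_head e f S T = (if e \<in> S then (insert f (S - {e}), insert e T - {f})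
                                 else (insert e S - {f}, insert f (T - {e})))"

definition rho :: "'e \<Rightarrow> 'e \<Rightarrow> 'e \<Rightarrow> 'e \<Rightarrow> 'e set \<times> 'e set \<Rightarrow> 'e set \<times> 'e set" where
  "rho eab ea eb ec P = (if eab \<in> fst P then ((fst P - {eab}) \<union> {ea, eb}, insert ec (snd P))
                         else (insert ec (fst P), (snd P - {eab}) \<union> {ea, eb}))"

end

theory Submission
  imports Defs
begin

text \<open>
  Both tau-graph conditions are read off connectivity: for spanning trees, an edge h lies in the
  fundamental cut D(S, e) iff the ends of h are not joined in S - e, and g lies on the fundamental
  cycle C(T, e) iff the ends of e are not joined in T - g.  Replacing e_ab by the path a v b turns
  the tree T through e_ab into the spanning tree T' = T - e_ab + e_a + e_b of G, and the pendant
  edge e_c extends S to S' = S + e_c.  Contracting v back onto a neighbour compares connectivity in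
  G with that in G_ab: if c is joined to a in S - f, then D(S', f) and C(T', f) meet exactly in f
  and e_b; otherwise c is joined to b and e_a plays this role.  The reverse arc exists because a unique exchange is undone by the swapped
  exchange, whose fundamental cut and cycle are the same sets.
\<close>

abbreviation reach :: "('e \<Rightarrow> 'v set) \<Rightarrow> 'e set \<Rightarrow> ('v \<times> 'v) set" where
  "reach ends F \<equiv> (adj_rel ends F)\<^sup>*"

definition joined :: "('e \<Rightarrow> 'v set) \<Rightarrow> 'e set \<Rightarrow> 'e \<Rightarrow> bool" where
  "joined ends F g \<longleftrightarrow> (\<exists>p q. ends g = {p, q} \<and> (p, q) \<in> reach ends F)"

definition all_bridges :: "('e \<Rightarrow> 'v set) \<Rightarrow> 'e set \<Rightarrow> bool" where
  "all_bridges ends F \<longleftrightarrow> (\<forall>g\<in>F. \<not> joined ends (F - {g}) g)"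

lemma sym_adj_rel: "sym (adj_rel ends F)"
  unfolding adj_rel_def sym_def by (auto simp: insert_commute)

lemma reach_sym: "(p, q) \<in> reach ends F \<Longrightarrow> (q, p) \<in> reach ends F"
  by (rule symD[OF sym_rtrancl[OF sym_adj_rel]])

lemma reach_common: "(p, r) \<in> reach ends F \<Longrightarrow> (q, r) \<in> reach ends F \<Longrightarrow> (p, q) \<in> reach ends F"
  by (rule rtrancl_trans[OF _ reach_sym])

lemma reach_edge: "g \<in> F \<Longrightarrow> ends g = {p, q} \<Longrightarrow> (p, q) \<in> reach ends F"
  unfolding adj_rel_def by blast

lemma reach_mono: "F \<subseteq> G \<Longrightarrow> (p, q) \<in> reach ends F \<Longrightarrow> (p, q) \<in> reach ends G"
proof -
  assume "F \<subseteq> G"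
  then have "adj_rel ends F \<subseteq> adj_rel ends G" unfolding adj_rel_def by blast
  then show "(p, q) \<in> reach ends F \<Longrightarrow> (p, q) \<in> reach ends G" using rtrancl_mono by blast
qed

lemma adj_rel_cong: "(\<And>g. g \<in> F \<Longrightarrow> ends1 g = ends2 g) \<Longrightarrow> adj_rel ends1 F = adj_rel ends2 F"
  unfolding adj_rel_def by force

lemma reach_map:
  assumes "\<And>g p q. g \<in> F1 \<Longrightarrow> ends1 g = {p, q} \<Longrightarrow> (\<pi> p, \<pi> q) \<in> reach ends2 F2"
    and "(p, q) \<in> reach ends1 F1"
  shows "(\<pi> p, \<pi> q) \<in> reach ends2 F2"
  using assms(2)
proof (induction rule: rtrancl_induct)
  case (step y z)
  then obtain g where "g \<in> F1" "ends1 g = {y, z}" unfolding adj_rel_def by blast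
  with assms(1) step.IH show ?case by (meson rtrancl_trans)
qed simp

lemma reach_isolated:
  assumes "\<And>g. g \<in> F \<Longrightarrow> v \<notin> ends g" and "(v, q) \<in> reach ends F"
  shows "q = v"
  using assms(2)
proof (induction rule: rtrancl_induct)
  case (step y z)
  then obtain g where "g \<in> F" "ends g = {y, z}" unfolding adj_rel_def by blast
  with step assms(1) show ?case by auto
qed simp

lemma reach_insert_edge:
  assumes "(r, s) \<in> reach ends (insert e F)" and "ends e = {p, q}"
  shows "(r, s) \<in> reach ends F \<or> ((r, p) \<in> reach ends F \<and> (q, s) \<in> reach ends F)
         \<or> ((r, q) \<in> reach ends F \<and> (p, s) \<in> reach ends F)"
  using assms(1)
proof (induction rule: rtrancl_induct)
  case (step y z)
  then obtain g where g: "g \<in> insert e F" "ends g = {y, z}" unfolding adj_rel_def by blast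
  show ?case
  proof (cases "g \<in> F")
    case True
    with g have "(y, z) \<in> reach ends F" by (metis reach_edge)
    with step.IH show ?thesis by (meson rtrancl_trans)
  next
    case False
    with g assms(2) have "(y = p \<and> z = q) \<or> (y = q \<and> z = p)" by (auto simp: doubleton_eq_iff)
    with step.IH show ?thesis by blast
  qed
qed simp

lemma joined_iff: "ends g = {p, q} \<Longrightarrow> joined ends F g \<longleftrightarrow> (p, q) \<in> reach ends F"
  unfolding joined_def by (metis doubleton_eq_iff reach_sym)

lemma joined_mono: "F \<subseteq> G \<Longrightarrow> joined ends F g \<Longrightarrow> joined ends G g"
  unfolding joined_def by (auto dest: reach_mono[of F G])

lemma joined_cong:
  "(\<And>h. h \<in> insert g F \<Longrightarrow> ends1 h = ends2 h) \<Longrightarrow> joined ends1 F g \<longleftrightarrow> joined ends2 F g"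
proof -
  assume eq: "\<And>h. h \<in> insert g F \<Longrightarrow> ends1 h = ends2 h"
  then have "adj_rel ends1 F = adj_rel ends2 F" by (intro adj_rel_cong) blast
  with eq show ?thesis unfolding joined_def by simp
qed

lemma all_bridges_cong:
  "(\<And>h. h \<in> F \<Longrightarrow> ends1 h = ends2 h) \<Longrightarrow> all_bridges ends1 F \<longleftrightarrow> all_bridges ends2 F"
proof -
  assume eq: "\<And>h. h \<in> F \<Longrightarrow> ends1 h = ends2 h"
  have "joined ends1 (F - {g}) g \<longleftrightarrow> joined ends2 (F - {g}) g" if "g \<in> F" for g
    by (rule joined_cong) (use eq that in blast)
  then show ?thesis unfolding all_bridges_def by blast
qed

lemma connected_on_cong:
  "(\<And>h. h \<in> F \<Longrightarrow> ends1 h = ends2 h) \<Longrightarrow> connected_on V F ends1 \<longleftrightarrow> connected_on V F ends2"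
  unfolding connected_on_def using adj_rel_cong[of F ends1 ends2] by simp

lemma connected_on_pairwise:
  assumes "V \<noteq> {}" and "\<And>x. x \<in> V \<Longrightarrow> (x, c) \<in> reach ends F"
  shows "connected_on V F ends"
  unfolding connected_on_def
proof (intro conjI ballI)
  fix x y assume "x \<in> V" "y \<in> V"
  then show "(x, y) \<in> reach ends F" by (rule reach_common[OF assms(2) assms(2)])
qed (rule assms(1))

section \<open>Paths, cycles and bridges\<close>

definition is_path :: "('e \<Rightarrow> 'v set) \<Rightarrow> 'e set \<Rightarrow> 'v list \<Rightarrow> 'e list \<Rightarrow> bool" where
  "is_path ends F vs es \<longleftrightarrow> length vs = Suc (length es) \<and> distinct vs \<and> set es \<subseteq> F
     \<and> (\<forall>i<length es. ends (es ! i) = {vs ! i, vs ! Suc i})"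

lemma reach_imp_path:
  assumes "(p, q) \<in> reach ends F"
  shows "\<exists>vs es. is_path ends F vs es \<and> hd vs = p \<and> last vs = q"
  using assms
proof (induction rule: rtrancl_induct)
  case base
  have "is_path ends F [p] []" by (simp add: is_path_def)
  then show ?case by fastforce
next
  case (step t t')
  then obtain h where h: "h \<in> F" "ends h = {t, t'}" unfolding adj_rel_def by blast
  from step.IH obtain vs es where P: "is_path ends F vs es" "hd vs = p" "last vs = t" by blast
  then have lv: "length vs = Suc (length es)" and dv: "distinct vs" and se: "set es \<subseteq> F"
    and ed: "\<forall>i<length es. ends (es ! i) = {vs ! i, vs ! Suc i}" unfolding is_path_def by auto
  have ne: "vs \<noteq> []" using lv by auto
  show ?case
  proof (cases "t' \<in> set vs")
    case True
    then obtain j where j: "j < length vs" "vs ! j = t'" by (metis in_set_conv_nth)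
    have "is_path ends F (take (Suc j) vs) (take j es)"
      unfolding is_path_def using j lv dv ed se by (auto dest: in_set_takeD)
    moreover have "hd (take (Suc j) vs) = p" using ne P(2) by (simp add: hd_take)
    moreover have "last (take (Suc j) vs) = t'" using j by (simp add: take_Suc_conv_app_nth)
    ultimately show ?thesis by blast
  next
    case False
    have "vs ! length es = t" using P(3) lv ne by (simp add: last_conv_nth)
    then have "is_path ends F (vs @ [t']) (es @ [h])"
      unfolding is_path_def using lv dv se ed h False by (auto simp: nth_append less_Suc_eq)
    moreover have "hd (vs @ [t']) = p" using ne P(2) by simp
    ultimately show ?thesis by fastforce
  qed
qed

lemma is_path_distinct_edges:
  assumes "is_path ends F vs es"
  shows "distinct es"
  unfolding distinct_conv_nth
proof (intro allI impI notI)
  fix i j assume ij: "i < length es" "j < length es" "i \<noteq> j" and eq: "es ! i = es ! j"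
  have lv: "length vs = Suc (length es)" and dv: "distinct vs"
    and ed: "\<forall>i<length es. ends (es ! i) = {vs ! i, vs ! Suc i}" using assms unfolding is_path_def by auto
  from eq ed ij have "{vs ! i, vs ! Suc i} = {vs ! j, vs ! Suc j}" by metis
  then have "vs ! i = vs ! j \<or> vs ! i = vs ! Suc j" "vs ! Suc i = vs ! j \<or> vs ! Suc i = vs ! Suc j"
    by blast+
  then show False using dv ij lv by (auto simp: nth_eq_iff_index_eq)
qed

lemma is_path_close_cycle:
  assumes "is_path ends F vs es" "hd vs = p" "last vs = q" "g \<notin> F" "ends g = {q, p}"
  shows "is_cycle ends (insert g (set es))"
proof -
  have lv: "length vs = Suc (length es)" and dv: "distinct vs" and se: "set es \<subseteq> F"
    and ed: "\<forall>i<length es. ends (es ! i) = {vs ! i, vs ! Suc i}" using assms(1) unfolding is_path_def by auto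
  have ne: "vs \<noteq> []" using lv by auto
  have "vs ! length es = q" using assms(3) lv ne by (simp add: last_conv_nth)
  moreover have "vs ! 0 = p" using assms(2) ne by (simp add: hd_conv_nth)
  ultimately have "\<forall>i<length (es @ [g]). ends ((es @ [g]) ! i) = {vs ! i, vs ! ((i + 1) mod length vs)}"
    using ed lv assms(5) by (auto simp: nth_append less_Suc_eq insert_commute mod_Suc)
  moreover have "distinct (es @ [g])"
    using is_path_distinct_edges[OF assms(1)] se assms(4) by auto
  ultimately show ?thesis
    unfolding is_cycle_def using lv dv by (intro exI[of _ vs] exI[of _ "es @ [g]"]) auto
qed

lemma is_cycle_joined:
  assumes cyc: "is_cycle ends C" and gC: "g \<in> C"
  shows "joined ends (C - {g}) g"
proof -
  obtain vs es where L: "length vs = length es" "es \<noteq> []" "distinct es" "set es = C"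
    "\<forall>i<length es. ends (es ! i) = {vs ! i, vs ! ((i + 1) mod length vs)}"
    using cyc unfolding is_cycle_def by blast
  define n where "n = length es"
  have n0: "0 < n" using L(2) n_def by simp
  have ed: "\<forall>i<n. ends (es ! i) = {vs ! i, vs ! ((i + 1) mod n)}" using L(5) L(1) n_def by simp
  obtain i where i: "i < n" "es ! i = g" using gC L(4) n_def by (metis in_set_conv_nth)
  have around: "j < n \<Longrightarrow> (vs ! ((i+1) mod n), vs ! ((i+1+j) mod n)) \<in> reach ends (C - {g})" for j
  proof (induction j)
    case (Suc j)
    define k where "k = (i+1+j) mod n"
    have "k < n" "k \<noteq> i" using n0 i Suc.prems by (auto simp: k_def mod_if split: if_splits)
    then have "es ! k \<in> C - {g}" using i L(3,4) n_def by (auto simp: nth_eq_iff_index_eq)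
    moreover have "ends (es ! k) = {vs ! k, vs ! ((i+1+Suc j) mod n)}"
      using ed \<open>k < n\<close> k_def by (simp add: mod_Suc_eq)
    ultimately have "(vs ! k, vs ! ((i+1+Suc j) mod n)) \<in> reach ends (C - {g})"
      by (rule reach_edge)
    with Suc k_def show ?case by (meson Suc_lessD rtrancl_trans)
  qed simp
  from around[of "n - 1"] have "(vs ! ((i+1) mod n), vs ! i) \<in> reach ends (C - {g})"
    using n0 i by (simp add: add.commute)
  then show ?thesis using ed i joined_iff by (metis insert_commute)
qed

lemma acyclic_edges_iff_all_bridges: "acyclic_edges ends F \<longleftrightarrow> all_bridges ends F"
proof
  assume ac: "acyclic_edges ends F"
  show "all_bridges ends F" unfolding all_bridges_def
  proof (intro ballI notI)
    fix g assume g: "g \<in> F" "joined ends (F - {g}) g"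
    then obtain p q where "ends g = {p, q}" "(p, q) \<in> reach ends (F - {g})"
      unfolding joined_def by blast
    then have pq: "ends g = {q, p}" "(p, q) \<in> reach ends (F - {g})" by (auto simp: insert_commute)
    obtain vs es where P: "is_path ends (F - {g}) vs es" "hd vs = p" "last vs = q"
      using reach_imp_path[OF pq(2)] by blast
    have "is_cycle ends (insert g (set es))"
      using is_path_close_cycle[OF P] pq(1) by simp
    moreover have "insert g (set es) \<subseteq> F" using P(1) g(1) unfolding is_path_def by blast
    ultimately show False using ac unfolding acyclic_edges_def by blast
  qed
next
  assume ab: "all_bridges ends F"
  show "acyclic_edges ends F" unfolding acyclic_edges_def
  proof
    assume "\<exists>C\<subseteq>F. is_cycle ends C"
    then obtain C where C: "C \<subseteq> F" "is_cycle ends C" by blast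
    then obtain es where "es \<noteq> []" "set es = C" unfolding is_cycle_def by blast
    then obtain g where g: "g \<in> C" by (metis last_in_set)
    have "joined ends (F - {g}) g"
      using joined_mono[OF _ is_cycle_joined[OF C(2) g]] C(1) by blast
    with ab g C(1) show False unfolding all_bridges_def by blast
  qed
qed

lemma reach_if_edges_joined:
  assumes "\<And>h. h \<in> F \<Longrightarrow> joined ends G h" and "(p, q) \<in> reach ends F"
  shows "(p, q) \<in> reach ends G"
proof -
  have "(id p, id q) \<in> reach ends G"
  proof (rule reach_map[OF _ assms(2)])
    fix h p q assume "h \<in> F" "ends h = {p, q}"
    then show "(id p, id q) \<in> reach ends G" using assms(1) joined_iff by (metis id_apply)
  qed
  then show ?thesis by simp
qed

lemma joined_if_edges_joined:
  "(\<And>h. h \<in> F \<Longrightarrow> joined ends G h) \<Longrightarrow> joined ends F g \<Longrightarrow> joined ends G g"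
proof -
  assume "\<And>h. h \<in> F \<Longrightarrow> joined ends G h" "joined ends F g"
  then show ?thesis unfolding joined_def[of ends F] joined_def[of ends G g]
    using reach_if_edges_joined[of F ends G] by blast
qed

lemma spanning_tree_iff:
  "spanning_tree V E ends T \<longleftrightarrow> T \<subseteq> E \<and> connected_on V T ends \<and> all_bridges ends T"
  unfolding spanning_tree_def acyclic_edges_iff_all_bridges ..

lemma spanning_tree_reach:
  "spanning_tree V E ends T \<Longrightarrow> p \<in> V \<Longrightarrow> q \<in> V \<Longrightarrow> (p, q) \<in> reach ends T"
  unfolding spanning_tree_def connected_on_def by blast

section \<open>Contracting and subdividing at a vertex\<close>

lemma reach_contract_pendant:
  assumes off: "\<And>g. g \<in> F \<Longrightarrow> v \<notin> ends g" and e: "ends e = {v, c}"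
    and r: "(x, y) \<in> reach ends (insert e F)"
  shows "(if x = v then c else x, if y = v then c else y) \<in> reach ends F"
proof (rule reach_map[OF _ r])
  fix g p q assume g: "g \<in> insert e F" "ends g = {p, q}"
  show "(if p = v then c else p, if q = v then c else q) \<in> reach ends F"
  proof (cases "g = e")
    case True
    with g e have "(p = v \<and> q = c) \<or> (p = c \<and> q = v)" by (auto simp: doubleton_eq_iff)
    then show ?thesis by auto
  next
    case False
    with g off have "g \<in> F" "p \<noteq> v" "q \<noteq> v" by auto
    with g(2) show ?thesis using reach_edge[of g F ends p q] by simp
  qed
qed

lemma joined_contract_pendant:
  assumes off: "\<And>g. g \<in> F \<Longrightarrow> v \<notin> ends g" and e: "ends e = {v, c}" and h: "v \<notin> ends h"
    and j: "joined ends (insert e F) h"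
  shows "joined ends F h"
proof -
  obtain p q where pq: "ends h = {p, q}" "(p, q) \<in> reach ends (insert e F)"
    using j unfolding joined_def by blast
  with h have "p \<noteq> v" "q \<noteq> v" by auto
  with reach_contract_pendant[OF off e pq(2)] pq(1) show ?thesis unfolding joined_def by auto
qed

lemma reach_subdivide:
  assumes ea: "ends ea = {v, a}" and eb: "ends eb = {v, b}"
    and r: "(x, y) \<in> reach (ends(e := {a, b})) F"
  shows "(x, y) \<in> reach ends (insert ea (insert eb (F - {e})))"
proof -
  let ?F = "insert ea (insert eb (F - {e}))"
  have "(id x, id y) \<in> reach ends ?F"
  proof (rule reach_map[OF _ r])
    fix g p q assume g: "g \<in> F" "(ends(e := {a, b})) g = {p, q}"
    show "(id p, id q) \<in> reach ends ?F"
    proof (cases "g = e")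
      case True
      have "(a, v) \<in> reach ends ?F" using reach_edge[of ea ?F ends a v] ea by (simp add: insert_commute)
      moreover have "(v, b) \<in> reach ends ?F" using reach_edge[of eb ?F ends v b] eb by simp
      ultimately have "(a, b) \<in> reach ends ?F" by (rule rtrancl_trans)
      moreover have "(p = a \<and> q = b) \<or> (p = b \<and> q = a)"
        using g(2) True by (auto simp: doubleton_eq_iff)
      ultimately show ?thesis using reach_sym[of a b] by auto
    next
      case False
      with g have "g \<in> ?F" "ends g = {p, q}" by auto
      then show ?thesis by (simp add: reach_edge)
    qed
  qed
  then show ?thesis by simp
qed

lemma joined_subdivide:
  assumes "ends ea = {v, a}" "ends eb = {v, b}" "g \<noteq> e" "joined (ends(e := {a, b})) F g"
  shows "joined ends (insert ea (insert eb (F - {e}))) g"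
proof -
  obtain p q where pq: "(ends(e := {a, b})) g = {p, q}" "(p, q) \<in> reach (ends(e := {a, b})) F"
    using assms(4) unfolding joined_def by blast
  with assms(3) reach_subdivide[of ends ea v a eb b p q e F, OF assms(1,2)] show ?thesis
    unfolding joined_def by auto
qed

lemma reach_contract_subdivided:
  assumes off: "\<And>g. g \<in> F \<Longrightarrow> v \<notin> ends g" and eF: "e \<notin> F"
    and ea: "ends ea = {v, a}" and eb: "ends eb = {v, b}"
    and r: "(x, y) \<in> reach ends (insert ea (insert eb F))"
  shows "(if x = v then a else x, if y = v then a else y) \<in> reach (ends(e := {a, b})) (insert e F)"
proof (rule reach_map[OF _ r])
  let ?ends = "ends(e := {a, b})"
  fix g p q assume g: "g \<in> insert ea (insert eb F)" "ends g = {p, q}"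
  have ab: "(a, b) \<in> reach ?ends (insert e F)" using reach_edge[of e "insert e F" ?ends a b] by simp
  consider "g = ea" | "g = eb" | "g \<in> F" using g(1) by blast
  then show "(if p = v then a else p, if q = v then a else q) \<in> reach ?ends (insert e F)"
  proof cases
    case 1
    with g ea have "(p = v \<and> q = a) \<or> (p = a \<and> q = v)" by (auto simp: doubleton_eq_iff)
    then show ?thesis by auto
  next
    case 2
    with g eb have "(p = v \<and> q = b) \<or> (p = b \<and> q = v)" by (auto simp: doubleton_eq_iff)
    moreover have "b \<noteq> v \<or> b = v" by blast
    ultimately show ?thesis using ab reach_sym[OF ab] by auto
  next
    case 3
    with off g eF have "p \<noteq> v" "q \<noteq> v" "?ends g = {p, q}" "g \<in> insert e F" by auto
    then show ?thesis using reach_edge[of g "insert e F" ?ends p q] by simp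
  qed
qed

lemma connected_on_insert_pendant:
  assumes conn: "connected_on V F ends" and e: "ends e = {v, c}" and c: "c \<in> V"
  shows "connected_on (insert v V) (insert e F) ends"
proof (rule connected_on_pairwise)
  fix x assume x: "x \<in> insert v V"
  show "(x, c) \<in> reach ends (insert e F)"
  proof (cases "x = v")
    case True
    then show ?thesis using reach_edge[of e "insert e F" ends v c] e by simp
  next
    case False
    with x conn c have "(x, c) \<in> reach ends F" unfolding connected_on_def by blast
    then show ?thesis by (rule reach_mono[rotated]) blast
  qed
qed simp

lemma all_bridges_insert_pendant:
  assumes bridges: "all_bridges ends F" and off: "\<And>g. g \<in> F \<Longrightarrow> v \<notin> ends g"
    and e: "ends e = {v, c}" and cv: "c \<noteq> v" and eF: "e \<notin> F"
  shows "all_bridges ends (insert e F)"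
  unfolding all_bridges_def
proof (intro ballI notI)
  fix g assume g: "g \<in> insert e F" and j: "joined ends (insert e F - {g}) g"
  show False
  proof (cases "g = e")
    case True
    with eF have "insert e F - {g} = F" by auto
    with j True have "(v, c) \<in> reach ends F" by (simp add: joined_iff[of ends e v c, OF e])
    then show False using reach_isolated[of F v ends c, OF off] cv by simp
  next
    case False
    with g have gF: "g \<in> F" by simp
    have "insert e F - {g} = insert e (F - {g})" using False by auto
    with j have "joined ends (insert e (F - {g})) g" by simp
    with joined_contract_pendant[of "F - {g}" v ends e c g] off gF e
    have "joined ends (F - {g}) g" by blast
    with bridges gF show False unfolding all_bridges_def by blast
  qed
qed

lemma connected_on_subdivide:
  assumes conn: "connected_on V (insert e F) (ends(e := {a, b}))"
    and ea: "ends ea = {v, a}" and eb: "ends eb = {v, b}" and a: "a \<in> V"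
  shows "connected_on (insert v V) (insert ea (insert eb F)) ends"
proof (rule connected_on_pairwise)
  let ?F = "insert ea (insert eb F)"
  fix x assume x: "x \<in> insert v V"
  show "(x, a) \<in> reach ends ?F"
  proof (cases "x = v")
    case True
    then show ?thesis using reach_edge[of ea ?F ends v a] ea by simp
  next
    case False
    with x conn a have "(x, a) \<in> reach (ends(e := {a, b})) (insert e F)"
      unfolding connected_on_def by blast
    from reach_subdivide[OF ea eb this] show ?thesis by (rule reach_mono[rotated]) blast
  qed
qed simp

lemma all_bridges_subdivide:
  assumes bridges: "all_bridges (ends(e := {a, b})) (insert e F)" and eF: "e \<notin> F"
    and off: "\<And>g. g \<in> F \<Longrightarrow> v \<notin> ends g"
    and ea: "ends ea = {v, a}" and eb: "ends eb = {v, b}" and av: "a \<noteq> v" and bv: "b \<noteq> v"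
    and new: "ea \<notin> F" "eb \<notin> F" "ea \<noteq> eb"
  shows "all_bridges ends (insert ea (insert eb F))"
  unfolding all_bridges_def
proof (intro ballI notI)
  let ?ends = "ends(e := {a, b})"
  have "\<not> joined ?ends (insert e F - {e}) e" using bridges unfolding all_bridges_def by blast
  moreover have "insert e F - {e} = F" using eF by auto
  moreover have "adj_rel ?ends F = adj_rel ends F" using eF by (intro adj_rel_cong) auto
  ultimately have not_ab: "(a, b) \<notin> reach ends F" by (simp add: joined_iff[of ?ends e a b])
  fix g assume g: "g \<in> insert ea (insert eb F)" and j: "joined ends (insert ea (insert eb F) - {g}) g"
  consider "g = ea" | "g = eb" | "g \<in> F" "g \<noteq> ea" "g \<noteq> eb" using g by blast
  then show False
  proof cases
    case 1
    with new have "insert ea (insert eb F) - {g} = insert eb F" by auto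
    with j 1 have "(v, a) \<in> reach ends (insert eb F)" by (simp add: joined_iff[of ends ea v a, OF ea])
    from reach_contract_pendant[OF off eb this] av have "(b, a) \<in> reach ends F" by simp
    then have "(a, b) \<in> reach ends F" by (rule reach_sym)
    with not_ab show False ..
  next
    case 2
    with new have "insert ea (insert eb F) - {g} = insert ea F" by auto
    with j 2 have "(v, b) \<in> reach ends (insert ea F)" by (simp add: joined_iff[of ends eb v b, OF eb])
    from reach_contract_pendant[OF off ea this] bv have "(a, b) \<in> reach ends F" by simp
    with not_ab show False ..
  next
    case 3
    obtain p q where pq: "ends g = {p, q}" using j unfolding joined_def by blast
    with off 3 have pq_v: "p \<noteq> v" "q \<noteq> v" by auto
    have "insert ea (insert eb F) - {g} = insert ea (insert eb (F - {g}))" using 3 by auto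
    with j have "(p, q) \<in> reach ends (insert ea (insert eb (F - {g})))"
      by (simp add: joined_iff[of ends g p q, OF pq])
    from reach_contract_subdivided[of "F - {g}" v ends e, OF _ _ ea eb this] off eF pq_v
    have "(p, q) \<in> reach ?ends (insert e (F - {g}))" by simp
    moreover have "insert e (F - {g}) = insert e F - {g}" "?ends g = {p, q}" using 3 eF pq by auto
    ultimately have "joined ?ends (insert e F - {g}) g" by (simp add: joined_iff[of ?ends g p q])
    with bridges 3 show False unfolding all_bridges_def by blast
  qed
qed

section \<open>Fundamental cuts, cycles and exchanges\<close>

lemma tau_vertices_swap: "(T, S) \<in> tau_vertices V E ends \<longleftrightarrow> (S, T) \<in> tau_vertices V E ends"
  unfolding tau_vertices_def by auto

lemma unique_T_exchange_eq: "unique_T_exchange E ends S T = unique_S_exchange E ends T S"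
  unfolding unique_T_exchange_def unique_S_exchange_def by (intro ext) simp

lemma tau3_arc_swap: "tau3_arc V E ends e f T S \<longleftrightarrow> tau3_arc V E ends e f S T"
  unfolding tau3_arc_def tau_vertices_swap unique_T_exchange_eq by blast

lemma arc_head_swap: "e \<in> T \<Longrightarrow> e \<notin> S \<Longrightarrow> arc_head e f S T = prod.swap (arc_head e f T S)"
  unfolding arc_head_def by simp

locale loopless_graph =
  fixes V :: "'v set" and E :: "'e set" and ends :: "'e \<Rightarrow> 'v set"
  assumes ends_subset: "g \<in> E \<Longrightarrow> ends g \<subseteq> V"
    and card_ends: "g \<in> E \<Longrightarrow> card (ends g) = 2"
begin

lemma obtain_ends:
  assumes "g \<in> E"
  obtains p q where "ends g = {p, q}" "p \<noteq> q" "p \<in> V" "q \<in> V"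
  using card_ends[OF assms] ends_subset[OF assms] by (metis card_2_iff insert_subset)

lemma joined_member: "g \<in> F \<Longrightarrow> g \<in> E \<Longrightarrow> joined ends F g"
  by (metis obtain_ends joined_iff reach_edge)

lemma tree_minus_edge_reach:
  assumes T: "spanning_tree V E ends T" and fT: "f \<in> T" and uw: "ends f = {u, w}" and x: "x \<in> V"
  shows "(x, u) \<in> reach ends (T - {f}) \<or> (x, w) \<in> reach ends (T - {f})"
proof -
  have "u \<in> V" using uw fT T ends_subset unfolding spanning_tree_def by blast
  then have "(x, u) \<in> reach ends (insert f (T - {f}))"
    using spanning_tree_reach[OF T x] fT by (simp add: insert_absorb)
  from reach_insert_edge[OF this uw] show ?thesis by (blast intro: reach_sym)
qed

lemma tree_minus_edge_reach_two_of_three: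
  assumes T: "spanning_tree V E ends T" and fT: "f \<in> T" and V: "x \<in> V" "y \<in> V" "z \<in> V"
  shows "(x, y) \<in> reach ends (T - {f}) \<or> (x, z) \<in> reach ends (T - {f}) \<or> (y, z) \<in> reach ends (T - {f})"
proof -
  have "f \<in> E" using T fT unfolding spanning_tree_def by blast
  then obtain u w where uw: "ends f = {u, w}" by (rule obtain_ends)
  have "(x, u) \<in> reach ends (T - {f}) \<or> (x, w) \<in> reach ends (T - {f})"
    "(y, u) \<in> reach ends (T - {f}) \<or> (y, w) \<in> reach ends (T - {f})"
    "(z, u) \<in> reach ends (T - {f}) \<or> (z, w) \<in> reach ends (T - {f})"
    using tree_minus_edge_reach[OF T fT uw] V by blast+
  then show ?thesis by (elim disjE; metis reach_common)
qed

lemma fund_cut_eq: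
  assumes S: "spanning_tree V E ends S" and eS: "e \<in> S"
  shows "fund_cut E ends S e = {h \<in> E. \<not> joined ends (S - {e}) h}"
proof -
  let ?R = "reach ends (S - {e})"
  have not_joined_e: "\<not> joined ends (S - {e}) e"
    using S eS unfolding spanning_tree_iff all_bridges_def by blast
  have "e \<in> E" using S eS unfolding spanning_tree_def by blast
  then obtain u w where uw: "ends e = {u, w}" by (rule obtain_ends)
  have "h \<in> fund_cut E ends S e \<longleftrightarrow> \<not> joined ends (S - {e}) h" if hE: "h \<in> E" for h
  proof
    assume "h \<in> fund_cut E ends S e"
    then obtain u' w' p q where uw': "ends e = {u', w'}" and pq: "ends h = {p, q}"
      and "(p, u') \<in> ?R" "(q, w') \<in> ?R"
      unfolding fund_cut_def by blast
    show "\<not> joined ends (S - {e}) h"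
    proof
      assume "joined ends (S - {e}) h"
      then have "(p, q) \<in> ?R" using pq joined_iff by metis
      with \<open>(p, u') \<in> ?R\<close> \<open>(q, w') \<in> ?R\<close> have "(u', w') \<in> ?R"
        by (meson reach_common reach_sym)
      then show False using not_joined_e uw' joined_iff by metis
    qed
  next
    assume nj: "\<not> joined ends (S - {e}) h"
    obtain p q where pq: "ends h = {p, q}" "p \<in> V" "q \<in> V" using obtain_ends[OF hE] by blast
    then have npq: "(p, q) \<notin> ?R" using nj joined_iff by metis
    have "(p, u) \<in> ?R \<or> (p, w) \<in> ?R" "(q, u) \<in> ?R \<or> (q, w) \<in> ?R"
      using tree_minus_edge_reach[OF S eS uw] pq by blast+
    with npq have "((p, u) \<in> ?R \<and> (q, w) \<in> ?R) \<or> ((p, w) \<in> ?R \<and> (q, u) \<in> ?R)"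
      by (meson reach_common)
    moreover have "ends e = {w, u}" using uw by (simp add: insert_commute)
    ultimately show "h \<in> fund_cut E ends S e"
      unfolding fund_cut_def using hE uw pq(1) by blast
  qed
  then show ?thesis unfolding fund_cut_def by blast
qed

lemma cycle_in_insert_tree_eq:
  assumes T: "spanning_tree V E ends T" and C: "C \<subseteq> insert e T" "is_cycle ends C"
  shows "C = insert e {g \<in> T. \<not> joined ends (T - {g}) e}"
proof -
  have TE: "T \<subseteq> E" and acyc: "acyclic_edges ends T"
    using T unfolding spanning_tree_def by blast+
  then have bridges: "all_bridges ends T" by (simp add: acyclic_edges_iff_all_bridges)
  have eC: "e \<in> C"
    using C acyc unfolding acyclic_edges_def by blast
  have "\<not> joined ends (T - {g}) e" if gC: "g \<in> C" and gT: "g \<in> T" and ge: "g \<noteq> e" for g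
  proof
    assume e_joined: "joined ends (T - {g}) e"
    \<comment> \<open>the cycle minus g, rerouted through T - g at e, would join the ends of g\<close>
    have "joined ends (T - {g}) h" if "h \<in> C - {g}" for h
    proof (cases "h = e")
      case False
      with that C(1) TE have "h \<in> T - {g}" "h \<in> E" by auto
      then show ?thesis by (rule joined_member)
    qed (use e_joined in simp)
    then have "joined ends (T - {g}) g"
      using joined_if_edges_joined[OF _ is_cycle_joined[OF C(2) gC]] by blast
    with bridges gT show False unfolding all_bridges_def by blast
  qed
  moreover have "g \<in> C" if "g \<in> T" "\<not> joined ends (T - {g}) e" for g
  proof (rule ccontr)
    assume "g \<notin> C"
    with C(1) have "C - {e} \<subseteq> T - {g}" by blast
    with joined_mono[OF _ is_cycle_joined[OF C(2) eC]] that(2) show False by blast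
  qed
  ultimately show ?thesis using C(1) eC by blast
qed

lemma fund_cycle_eq:
  assumes T: "spanning_tree V E ends T" and eE: "e \<in> E" and eT: "e \<notin> T"
  shows "fund_cycle ends T e = insert e {g \<in> T. \<not> joined ends (T - {g}) e}"
proof -
  obtain u w where uw: "ends e = {u, w}" "u \<in> V" "w \<in> V" using obtain_ends[OF eE] by blast
  then have "(w, u) \<in> reach ends T" by (intro spanning_tree_reach[OF T])
  then obtain vs es where P: "is_path ends T vs es" "hd vs = w" "last vs = u"
    by (blast dest: reach_imp_path)
  have "set es \<subseteq> T" using P(1) unfolding is_path_def by blast
  then have C: "insert e (set es) \<subseteq> insert e T" "is_cycle ends (insert e (set es))"
    using is_path_close_cycle[OF P eT uw(1)] by auto
  show ?thesis
    unfolding fund_cycle_def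
  proof (rule the_equality)
    show "insert e {g \<in> T. \<not> joined ends (T - {g}) e} \<subseteq> insert e T
      \<and> is_cycle ends (insert e {g \<in> T. \<not> joined ends (T - {g}) e})"
      using cycle_in_insert_tree_eq[OF T C] C by simp
  qed (use cycle_in_insert_tree_eq[OF T] in blast)
qed

lemma connected_on_exchange:
  assumes T: "spanning_tree V E ends T" and fT: "f \<in> T" and eE: "e \<in> E"
    and not_joined: "\<not> joined ends (T - {f}) e"
  shows "connected_on V (insert e (T - {f})) ends"
proof -
  define T' where "T' = insert e (T - {f})"
  let ?R = "reach ends (T - {f})"
  obtain u w where uw: "ends e = {u, w}" "u \<in> V" "w \<in> V" using obtain_ends[OF eE] by blast
  have nuw: "(u, w) \<notin> ?R" using not_joined by (simp add: joined_iff[of ends e u w, OF uw(1)])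
  have R_T': "(x, y) \<in> reach ends T'" if "(x, y) \<in> ?R" for x y
    by (rule reach_mono[OF _ that]) (auto simp: T'_def)
  have uw_T': "(u, w) \<in> reach ends T'"
    using reach_edge[of e T' ends u w] uw(1) T'_def by blast
  have "(x, u) \<in> reach ends T'" if "x \<in> V" for x
  proof -
    have "(x, u) \<in> ?R \<or> (x, w) \<in> ?R"
      using tree_minus_edge_reach_two_of_three[OF T fT that uw(2,3)] nuw by simp
    then show ?thesis
    proof
      assume "(x, u) \<in> ?R"
      then show ?thesis by (rule R_T')
    next
      assume "(x, w) \<in> ?R"
      show ?thesis by (rule rtrancl_trans[OF R_T'[OF \<open>(x, w) \<in> ?R\<close>] reach_sym[OF uw_T']])
    qed
  qed
  with uw(2) show ?thesis unfolding T'_def by (intro connected_on_pairwise) blast+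
qed

lemma bridge_survives_exchange:
  assumes T: "spanning_tree V E ends T" and gT: "g \<in> T" "g \<noteq> f"
    and uw: "ends e = {u, w}" and nuw: "(u, w) \<notin> reach ends (T - {f})"
  shows "\<not> joined ends (insert e (T - {f} - {g})) g"
proof
  let ?R = "reach ends (T - {f})"
  have "g \<in> E" using T gT unfolding spanning_tree_def by blast
  then obtain r s where rs: "ends g = {r, s}" by (rule obtain_ends)
  have not_rs: "(r, s) \<notin> reach ends (T - {f} - {g})"
  proof
    assume "(r, s) \<in> reach ends (T - {f} - {g})"
    then have "(r, s) \<in> reach ends (T - {g})" by (rule reach_mono[rotated]) blast
    then have "joined ends (T - {g}) g" by (simp add: joined_iff[of ends g r s, OF rs])
    with T gT show False unfolding spanning_tree_iff all_bridges_def by blast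
  qed
  have rs_R: "(r, s) \<in> ?R" using reach_edge[of g "T - {f}" ends r s] rs gT by blast
  have to_R: "(x, y) \<in> ?R" if "(x, y) \<in> reach ends (T - {f} - {g})" for x y
    using that by (rule reach_mono[rotated]) blast
  assume "joined ends (insert e (T - {f} - {g})) g"
  then have "(r, s) \<in> reach ends (insert e (T - {f} - {g}))"
    by (simp add: joined_iff[of ends g r s, OF rs])
  with not_rs have "(r, u) \<in> ?R \<and> (w, s) \<in> ?R \<or> (r, w) \<in> ?R \<and> (u, s) \<in> ?R"
    using reach_insert_edge[of r s ends e "T - {f} - {g}" u w] uw to_R by blast
  then have "(u, w) \<in> ?R"
  proof (elim disjE conjE)
    assume "(r, u) \<in> ?R" "(w, s) \<in> ?R"
    then show ?thesis by (rule reach_common[OF rtrancl_trans[OF reach_sym rs_R]])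
  next
    assume "(r, w) \<in> ?R" "(u, s) \<in> ?R"
    then show ?thesis by (rule reach_common[OF _ rtrancl_trans[OF reach_sym rs_R], rotated])
  qed
  with nuw show False ..
qed

lemma all_bridges_exchange:
  assumes T: "spanning_tree V E ends T" and eE: "e \<in> E"
    and not_joined: "\<not> joined ends (T - {f}) e"
  shows "all_bridges ends (insert e (T - {f}))"
  unfolding all_bridges_def
proof (intro ballI)
  obtain u w where uw: "ends e = {u, w}" using obtain_ends[OF eE] by blast
  fix g assume gT': "g \<in> insert e (T - {f})"
  show "\<not> joined ends (insert e (T - {f}) - {g}) g"
  proof (cases "g = e")
    case True
    have "e \<notin> T - {f}"
    proof
      assume "e \<in> T - {f}"
      then have "joined ends (T - {f}) e" using eE by (rule joined_member)
      with not_joined show False ..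
    qed
    then have "insert e (T - {f}) - {g} = T - {f}" unfolding True by blast
    then show ?thesis using not_joined True by simp
  next
    case False
    then have "insert e (T - {f}) - {g} = insert e (T - {f} - {g})" by auto
    moreover have "(u, w) \<notin> reach ends (T - {f})"
      using not_joined by (simp add: joined_iff[of ends e u w, OF uw])
    ultimately show ?thesis using bridge_survives_exchange[OF T _ _ uw] gT' False by auto
  qed
qed

lemma spanning_tree_exchange:
  assumes T: "spanning_tree V E ends T" and fT: "f \<in> T" and eE: "e \<in> E"
    and not_joined: "\<not> joined ends (T - {f}) e"
  shows "spanning_tree V E ends (insert e (T - {f}))"
  using connected_on_exchange[OF assms] all_bridges_exchange[OF T eE not_joined] T eE
  unfolding spanning_tree_iff by blast

lemma unique_S_exchange_reverse:
  assumes P: "(S, T) \<in> tau_vertices V E ends" and X: "unique_S_exchange E ends S T e f"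
  shows "(insert f (S - {e}), insert e T - {f}) \<in> tau_vertices V E ends
    \<and> unique_S_exchange E ends (insert f (S - {e})) (insert e T - {f}) f e"
proof -
  have S: "spanning_tree V E ends S" and T: "spanning_tree V E ends T"
    and disj: "S \<inter> T = {}" and un: "S \<union> T = E"
    using P unfolding tau_vertices_def by auto
  have eS: "e \<in> S" and fT: "f \<in> T"
    and I: "fund_cut E ends S e \<inter> fund_cycle ends T e = {e, f}"
    using X unfolding unique_S_exchange_def by auto
  have eE: "e \<in> E" and fE: "f \<in> E" and eT: "e \<notin> T" and fS: "f \<notin> S" and ef: "e \<noteq> f"
    using eS fT disj un by auto
  have "f \<in> fund_cut E ends S e" "f \<in> fund_cycle ends T e" using I by auto
  then have f_cut: "\<not> joined ends (S - {e}) f" and e_cyc: "\<not> joined ends (T - {f}) e"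
    using fund_cut_eq[OF S eS] fund_cycle_eq[OF T eE eT] ef by auto
  have S': "spanning_tree V E ends (insert f (S - {e}))"
    by (rule spanning_tree_exchange[OF S eS fE f_cut])
  have "insert e T - {f} = insert e (T - {f})" using ef by auto
  then have T': "spanning_tree V E ends (insert e T - {f})"
    using spanning_tree_exchange[OF T fT eE e_cyc] by simp
  have cyc: "fund_cycle ends (insert e T - {f}) f = fund_cycle ends T e"
    unfolding fund_cycle_def using fT by (simp add: insert_absorb)
  have "insert f (S - {e}) - {f} = S - {e}" using fS by auto
  then have cut: "fund_cut E ends (insert f (S - {e})) f = fund_cut E ends S e"
    using fund_cut_eq[OF S' insertI1] fund_cut_eq[OF S eS] by simp
  have "(insert f (S - {e}), insert e T - {f}) \<in> tau_vertices V E ends"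
    unfolding tau_vertices_def using S' T' disj un eS fT by auto
  moreover have "unique_S_exchange E ends (insert f (S - {e})) (insert e T - {f}) f e"
    unfolding unique_S_exchange_def cyc cut I using ef by auto
  ultimately show ?thesis ..
qed

lemma tau3_arc_reverse:
  assumes "tau3_arc V E ends e f S T"
  shows "tau3_arc V E ends f e (fst (arc_head e f S T)) (snd (arc_head e f S T))"
proof -
  have S_case: "tau3_arc V E ends f e (fst (arc_head e f S T)) (snd (arc_head e f S T))"
    if "(S, T) \<in> tau_vertices V E ends" "unique_S_exchange E ends S T e f" for S T
  proof -
    have "arc_head e f S T = (insert f (S - {e}), insert e T - {f})"
      using that(2) unfolding arc_head_def unique_S_exchange_def by simp
    then show ?thesis
      using unique_S_exchange_reverse[OF that] unfolding tau3_arc_def by simp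
  qed
  from assms have P: "(S, T) \<in> tau_vertices V E ends"
    and "unique_S_exchange E ends S T e f \<or> unique_S_exchange E ends T S e f"
    unfolding tau3_arc_def unique_T_exchange_eq by auto
  then show ?thesis
  proof (elim disjE)
    assume X: "unique_S_exchange E ends T S e f"
    then have "e \<in> T" "e \<notin> S" using P unfolding unique_S_exchange_def tau_vertices_def by auto
    then have "arc_head e f S T = prod.swap (arc_head e f T S)" by (rule arc_head_swap)
    moreover have "(T, S) \<in> tau_vertices V E ends" using P by (simp add: tau_vertices_swap)
    ultimately show ?thesis
      using S_case[OF _ X] by (simp add: tau3_arc_swap)
  qed (rule S_case[OF P])
qed

end

section \<open>Lifting arcs along the reduction\<close>

locale vertex_reduction = loopless_graph V E ends
  for V :: "'v set" and E :: "'e set" and ends :: "'e \<Rightarrow> 'v set" +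
  fixes v a b c :: 'v and ea eb ec eab :: 'e
  assumes distinct_nbrs: "distinct [a, b, c]" and distinct_edges: "distinct [ea, eb, ec]"
    and in_E: "ea \<in> E" "eb \<in> E" "ec \<in> E"
    and ends_ea: "ends ea = {v, a}" and ends_eb: "ends eb = {v, b}" and ends_ec: "ends ec = {v, c}"
    and edges_at_v: "\<And>g. g \<in> E \<Longrightarrow> v \<in> ends g \<Longrightarrow> g \<in> {ea, eb, ec}"
    and eab_new: "eab \<notin> E"
begin

text \<open>(V_red, E_red, ends_red) is the reduction graph G_{a,b}; E_rest are the edges it shares with G.\<close>

abbreviation "E_rest \<equiv> E - {ea, eb, ec}"
abbreviation "V_red \<equiv> V - {v}"
abbreviation "E_red \<equiv> E_rest \<union> {eab}"
abbreviation "ends_red \<equiv> ends(eab := {a, b})"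

lemma nbrs_ne_v: "a \<noteq> v" "b \<noteq> v" "c \<noteq> v"
  using card_ends[OF in_E(1)] card_ends[OF in_E(2)] card_ends[OF in_E(3)] ends_ea ends_eb ends_ec
  by auto

lemma in_V: "v \<in> V" "a \<in> V" "b \<in> V" "c \<in> V"
  using ends_subset[OF in_E(1)] ends_subset[OF in_E(3)] ends_subset[OF in_E(2)] ends_ea ends_eb ends_ec
  by auto

lemma rest_off_v: "g \<in> E_rest \<Longrightarrow> v \<notin> ends g"
  using edges_at_v by blast

lemma ends_red_rest: "g \<in> E_rest \<Longrightarrow> ends_red g = ends g"
  using eab_new by auto

sublocale red: loopless_graph V_red E_red ends_red
proof
  fix g assume g: "g \<in> E_red"
  show "ends_red g \<subseteq> V_red" "card (ends_red g) = 2"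
  proof (atomize (full), cases "g = eab")
    case True
    then show "ends_red g \<subseteq> V_red \<and> card (ends_red g) = 2"
      using in_V nbrs_ne_v distinct_nbrs by auto
  next
    case False
    with g have "g \<in> E_rest" by blast
    then show "ends_red g \<subseteq> V_red \<and> card (ends_red g) = 2"
      using ends_subset card_ends rest_off_v ends_red_rest by auto
  qed
qed

lemma reach_red_rest:
  assumes "F \<subseteq> E_rest"
  shows "reach ends_red F = reach ends F"
proof -
  have "adj_rel ends_red F = adj_rel ends F"
    by (rule adj_rel_cong, rule ends_red_rest) (use assms in blast)
  then show ?thesis by simp
qed

lemma spanning_tree_red_rest:
  assumes "spanning_tree V_red E_red ends_red S" "S \<subseteq> E_rest"
  shows "connected_on V_red S ends" "all_bridges ends S"
proof -
  have "\<And>h. h \<in> S \<Longrightarrow> ends_red h = ends h" using assms(2) ends_red_rest by blast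
  then show "connected_on V_red S ends" "all_bridges ends S"
    using assms(1) connected_on_cong[of S ends_red ends V_red] all_bridges_cong[of S ends_red ends]
    unfolding spanning_tree_iff by blast+
qed

lemma spanning_tree_add_pendant:
  assumes S: "spanning_tree V_red E_red ends_red S" and eab: "eab \<notin> S"
  shows "spanning_tree V E ends (insert ec S)"
proof -
  have SE: "S \<subseteq> E_rest" using S eab unfolding spanning_tree_def by blast
  note S_rest = spanning_tree_red_rest[OF S SE]
  have "connected_on (insert v V_red) (insert ec S) ends"
    using connected_on_insert_pendant[OF S_rest(1) ends_ec] in_V nbrs_ne_v by blast
  moreover have "insert v V_red = V" using in_V by blast
  moreover have "all_bridges ends (insert ec S)"
    using all_bridges_insert_pendant[OF S_rest(2) _ ends_ec] SE rest_off_v nbrs_ne_v by blast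
  ultimately show ?thesis unfolding spanning_tree_iff using SE in_E by auto
qed

lemma spanning_tree_subdivide:
  assumes T: "spanning_tree V_red E_red ends_red T" and eab: "eab \<in> T"
  shows "spanning_tree V E ends (T - {eab} \<union> {ea, eb})"
proof -
  define T0 where "T0 = T - {eab}"
  have T_eq: "T = insert eab T0" using eab T0_def by blast
  have T0E: "T0 \<subseteq> E_rest" using T T0_def unfolding spanning_tree_def by blast
  have off: "\<And>g. g \<in> T0 \<Longrightarrow> v \<notin> ends g" using T0E rest_off_v by blast
  have new: "eab \<notin> T0" "ea \<notin> T0" "eb \<notin> T0" using T0E T0_def by auto
  have conn: "connected_on V_red (insert eab T0) ends_red"
    and bridges: "all_bridges ends_red (insert eab T0)"
    using T T_eq unfolding spanning_tree_iff by auto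
  have "connected_on (insert v V_red) (insert ea (insert eb T0)) ends"
    using connected_on_subdivide[of V_red eab T0 ends a b ea v eb, OF conn ends_ea ends_eb]
      in_V nbrs_ne_v by blast
  moreover have "insert v V_red = V" using in_V by blast
  moreover have "all_bridges ends (insert ea (insert eb T0))"
    using all_bridges_subdivide[of ends eab a b T0 v ea eb, OF bridges new(1) off ends_ea ends_eb]
      nbrs_ne_v new distinct_edges by simp
  moreover have "T - {eab} \<union> {ea, eb} = insert ea (insert eb T0)" using T0_def by blast
  ultimately show ?thesis unfolding spanning_tree_iff using T0E in_E by auto
qed

end

locale red_exchange = vertex_reduction +
  fixes S T f
  assumes tau_red: "(S, T) \<in> tau_vertices V_red E_red ends_red"
    and exchange_red: "unique_S_exchange E_red ends_red S T f eab"
begin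

text \<open>Since eab \<in> T, rho_{eab,c}(S, T) = (S_lift, T_lift).\<close>

abbreviation "T_rest \<equiv> T - {eab}"
abbreviation "S_lift \<equiv> insert ec S"
abbreviation "T_lift \<equiv> insert ea (insert eb T_rest)"

lemma red_trees: "spanning_tree V_red E_red ends_red S" "spanning_tree V_red E_red ends_red T"
  using tau_red unfolding tau_vertices_def by auto

lemma f_in_S: "f \<in> S" and eab_in_T: "eab \<in> T"
  and red_exchange_set: "fund_cut E_red ends_red S f \<inter> fund_cycle ends_red T f = {f, eab}"
  using exchange_red unfolding unique_S_exchange_def by auto

lemma S_rest: "S \<subseteq> E_rest" and T_rest: "T_rest \<subseteq> E_rest" and f_notin_T: "f \<notin> T"
  using tau_red eab_in_T f_in_S unfolding tau_vertices_def by auto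

lemma f_rest: "f \<in> E_rest"
  using f_in_S S_rest by blast

lemma reach_S_minus_f: "reach ends_red (S - {f}) = reach ends (S - {f})"
  using S_rest by (intro reach_red_rest) blast

lemma lifted_trees: "spanning_tree V E ends S_lift" "spanning_tree V E ends T_lift"
proof -
  have "eab \<notin> S" using S_rest eab_new by blast
  then show "spanning_tree V E ends S_lift" by (rule spanning_tree_add_pendant[OF red_trees(1)])
  have "T - {eab} \<union> {ea, eb} = T_lift" by blast
  then show "spanning_tree V E ends T_lift"
    using spanning_tree_subdivide[OF red_trees(2) eab_in_T] by simp
qed

lemma lifted_cut: "fund_cut E ends S_lift f = {h \<in> E. \<not> joined ends (insert ec (S - {f})) h}"
proof -
  have "S_lift - {f} = insert ec (S - {f})" using f_rest by auto
  then show ?thesis using fund_cut_eq[OF lifted_trees(1)] f_in_S by simp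
qed

lemma lifted_cycle: "fund_cycle ends T_lift f = insert f {g \<in> T_lift. \<not> joined ends (T_lift - {g}) f}"
  using fund_cycle_eq[OF lifted_trees(2)] f_rest f_notin_T by simp

lemma a_b_separated: "(a, b) \<notin> reach ends (S - {f})"
proof -
  have "eab \<in> fund_cut E_red ends_red S f" using red_exchange_set by blast
  then have "\<not> joined ends_red (S - {f}) eab" using red.fund_cut_eq[OF red_trees(1) f_in_S] by blast
  then show ?thesis by (simp add: joined_iff[of ends_red eab a b] reach_S_minus_f)
qed

lemma f_not_joined_T_rest: "\<not> joined ends T_rest f"
proof -
  have "f \<in> E_red" "f \<noteq> eab" using f_rest eab_new by auto
  moreover have "eab \<in> fund_cycle ends_red T f" using red_exchange_set by blast
  ultimately have "\<not> joined ends_red T_rest f"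
    using red.fund_cycle_eq[OF red_trees(2) _ f_notin_T] by simp
  moreover have "\<And>h. h \<in> insert f T_rest \<Longrightarrow> ends_red h = ends h"
    using f_rest T_rest ends_red_rest by blast
  ultimately show ?thesis using joined_cong[of f T_rest ends_red ends] by blast
qed

lemma lifted_tau_vertex: "(S_lift, T - {eab} \<union> {ea, eb}) \<in> tau_vertices V E ends"
proof -
  have disj: "S \<inter> T = {}" and un: "S \<union> T = E_red" using tau_red unfolding tau_vertices_def by auto
  then have "S \<union> T_rest = E_rest" using S_rest eab_new by blast
  moreover have "E = E_rest \<union> {ea, eb, ec}" using in_E by blast
  ultimately have "S_lift \<union> T_lift = E" by blast
  moreover have "S_lift \<inter> T_lift = {}" using disj S_rest T_rest distinct_edges by auto
  ultimately show ?thesis unfolding tau_vertices_def using lifted_trees by auto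
qed

lemma c_joins_a_or_b: "(c, a) \<in> reach ends_red (S - {f}) \<or> (c, b) \<in> reach ends_red (S - {f})"
  using red.tree_minus_edge_reach_two_of_three[OF red_trees(1) f_in_S, of c a b]
    in_V nbrs_ne_v a_b_separated reach_S_minus_f by auto

end

locale exchange_lift = red_exchange +
  assumes c_joins_a: "(c, a) \<in> reach ends_red (S - {f})"
begin

lemma v_joins_a: "(v, a) \<in> reach ends (insert ec (S - {f}))"
proof -
  have "(v, c) \<in> reach ends (insert ec (S - {f}))"
    using reach_edge[of ec "insert ec (S - {f})" ends v c] ends_ec by simp
  moreover have "(c, a) \<in> reach ends (insert ec (S - {f}))"
    using c_joins_a reach_S_minus_f by (auto intro: reach_mono[rotated])
  ultimately show ?thesis by (rule rtrancl_trans)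
qed

lemma eb_in_lifted_cut: "eb \<in> fund_cut E ends S_lift f"
proof -
  have "\<not> joined ends (insert ec (S - {f})) eb"
  proof
    assume "joined ends (insert ec (S - {f})) eb"
    then have "(v, b) \<in> reach ends (insert ec (S - {f}))" by (simp add: joined_iff[of ends eb v b, OF ends_eb])
    from reach_contract_pendant[of "S - {f}" v ends ec c, OF _ ends_ec this] S_rest rest_off_v nbrs_ne_v
    have "(c, b) \<in> reach ends (S - {f})" by auto
    moreover have "(a, c) \<in> reach ends (S - {f})" using c_joins_a reach_S_minus_f reach_sym by auto
    ultimately show False using a_b_separated rtrancl_trans by metis
  qed
  then show ?thesis unfolding lifted_cut using in_E by blast
qed

lemma eb_in_lifted_cycle: "eb \<in> fund_cycle ends T_lift f"
proof -
  have "T_lift - {eb} = insert ea T_rest" using T_rest distinct_edges by auto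
  moreover have "\<not> joined ends (insert ea T_rest) f"
    using joined_contract_pendant[of T_rest v ends ea a f, OF _ ends_ea] f_not_joined_T_rest
      T_rest rest_off_v f_rest by blast
  ultimately show ?thesis unfolding lifted_cycle by simp
qed

lemma ea_notin_lifted_cut: "ea \<notin> fund_cut E ends S_lift f"
  using v_joins_a unfolding lifted_cut by (simp add: joined_iff[of ends ea v a, OF ends_ea])

lemma T_rest_disjoint_lifted_exchange_set:
  assumes hT: "h \<in> T_rest" and cut: "h \<in> fund_cut E ends S_lift f"
    and cyc: "h \<in> fund_cycle ends T_lift f"
  shows False
proof -
  have h_rest: "h \<in> E_rest" and hf: "h \<noteq> f" using hT T_rest f_notin_T by auto
  have "\<not> joined ends (S - {f}) h"
    using cut joined_mono[of "S - {f}" "insert ec (S - {f})" ends h] unfolding lifted_cut by blast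
  moreover have "\<And>g. g \<in> insert h (S - {f}) \<Longrightarrow> ends_red g = ends g"
    using h_rest S_rest ends_red_rest by blast
  ultimately have "\<not> joined ends_red (S - {f}) h"
    using joined_cong[of h "S - {f}" ends_red ends] by blast
  then have "h \<in> fund_cut E_red ends_red S f"
    using red.fund_cut_eq[OF red_trees(1) f_in_S] h_rest by blast
  moreover have "\<not> joined ends_red (T - {h}) f"
  proof
    assume "joined ends_red (T - {h}) f"
    from joined_subdivide[OF ends_ea ends_eb _ this] f_rest eab_new
    have "joined ends (insert ea (insert eb (T - {h} - {eab}))) f" by auto
    moreover have "insert ea (insert eb (T - {h} - {eab})) = T_lift - {h}"
      using hT h_rest by auto
    ultimately show False using cyc hf unfolding lifted_cycle by simp
  qed
  then have "h \<in> fund_cycle ends_red T f"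
    using red.fund_cycle_eq[OF red_trees(2) _ f_notin_T] f_rest hT by simp
  ultimately have "h \<in> {f, eab}" using red_exchange_set by blast
  with hT hf show False by auto
qed

lemma lifted_exchange_set_subset: "fund_cut E ends S_lift f \<inter> fund_cycle ends T_lift f \<subseteq> {f, eb}"
proof
  fix h assume h: "h \<in> fund_cut E ends S_lift f \<inter> fund_cycle ends T_lift f"
  then have "h = f \<or> h = ea \<or> h = eb \<or> h \<in> T_rest" unfolding lifted_cycle by blast
  with h ea_notin_lifted_cut T_rest_disjoint_lifted_exchange_set show "h \<in> {f, eb}" by blast
qed

lemma unique_S_exchange_lifted: "unique_S_exchange E ends S_lift (T - {eab} \<union> {ea, eb}) f eb"
proof -
  have "T - {eab} \<union> {ea, eb} = T_lift" by blast
  moreover have "\<not> joined ends (S_lift - {f}) f"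
    using lifted_trees(1) f_in_S unfolding spanning_tree_iff all_bridges_def by blast
  then have "f \<in> fund_cut E ends S_lift f" "f \<in> fund_cycle ends T_lift f"
    using fund_cut_eq[OF lifted_trees(1)] f_in_S f_rest unfolding lifted_cycle by auto
  ultimately show ?thesis
    unfolding unique_S_exchange_def
    using lifted_exchange_set_subset eb_in_lifted_cut eb_in_lifted_cycle f_in_S by auto
qed

end

context vertex_reduction
begin

lemma lift_S_exchange:
  assumes P: "(S, T) \<in> tau_vertices V_red E_red ends_red"
    and X: "unique_S_exchange E_red ends_red S T f eab"
  shows "\<exists>e2\<in>{ea, eb}. tau3_arc V E ends f e2 (insert ec S) (T - {eab} \<union> {ea, eb})"
proof -
  interpret red_exchange V E ends v a b c ea eb ec eab S T f
    using P X by unfold_locales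
  from c_joins_a_or_b show ?thesis
  proof
    assume "(c, a) \<in> reach ends_red (S - {f})"
    then interpret exchange_lift V E ends v a b c ea eb ec eab S T f
      by unfold_locales
    show ?thesis using lifted_tau_vertex unique_S_exchange_lifted unfolding tau3_arc_def by blast
  next
    assume cb: "(c, b) \<in> reach ends_red (S - {f})"
    have swap: "E - {eb, ea, ec} = E_rest" "ends(eab := {b, a}) = ends_red"
      "T - {eab} \<union> {eb, ea} = T - {eab} \<union> {ea, eb}"
      by (auto simp: insert_commute)
    interpret swapped: exchange_lift V E ends v b a c eb ea ec eab S T f
    proof unfold_locales
      show "distinct [b, a, c]" "distinct [eb, ea, ec]" using distinct_nbrs distinct_edges by auto
      show "\<And>g. g \<in> E \<Longrightarrow> v \<in> ends g \<Longrightarrow> g \<in> {eb, ea, ec}" using edges_at_v by blast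
    qed (use in_E ends_ea ends_eb ends_ec eab_new P X cb in \<open>simp_all add: swap\<close>)
    show ?thesis
      using swapped.lifted_tau_vertex swapped.unique_S_exchange_lifted
      unfolding tau3_arc_def swap by blast
  qed
qed

lemma lift_arc:
  assumes "tau3_arc V_red E_red ends_red f eab S T"
  shows "\<exists>e2\<in>{ea, eb}. tau3_arc V E ends f e2 (fst (rho eab ea eb ec (S, T))) (snd (rho eab ea eb ec (S, T)))"
proof -
  from assms have P: "(S, T) \<in> tau_vertices V_red E_red ends_red"
    and "unique_S_exchange E_red ends_red S T f eab \<or> unique_S_exchange E_red ends_red T S f eab"
    unfolding tau3_arc_def unique_T_exchange_eq by auto
  then show ?thesis
  proof (elim disjE)
    assume X: "unique_S_exchange E_red ends_red S T f eab"
    then have "eab \<notin> S" using P unfolding unique_S_exchange_def tau_vertices_def by auto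
    then show ?thesis using lift_S_exchange[OF P X] unfolding rho_def by simp
  next
    assume X: "unique_S_exchange E_red ends_red T S f eab"
    then have "eab \<in> S" unfolding unique_S_exchange_def by simp
    moreover have "(T, S) \<in> tau_vertices V_red E_red ends_red" using P by (simp add: tau_vertices_swap)
    ultimately show ?thesis using lift_S_exchange[OF _ X] unfolding rho_def by (simp add: tau3_arc_swap)
  qed
qed

end

theorem mainTheorem15:
  fixes V :: "'v set" and E :: "'e set" and ends :: "'e \<Rightarrow> 'v set"
    and v x y z a b c :: 'v and ex ey ez ea eb ec eab f :: 'e and S T :: "'e set"
  assumes "mgraph V E ends" and "bispanning V E ends" and "atomic V E ends"
    and "v \<in> V"
    and "distinct [x, y, z]" and "distinct [ex, ey, ez]"
    and "{e \<in> E. v \<in> ends e} = {ex, ey, ez}"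
    and "ends ex = {v, x}" and "ends ey = {v, y}" and "ends ez = {v, z}"
    and "(a, b, c, ea, eb, ec) \<in> {(x, y, z, ex, ey, ez), (x, z, y, ex, ez, ey), (y, z, x, ey, ez, ex)}"
    and "eab \<notin> E"
    and "tau3_arc (V - {v}) ((E - {ex, ey, ez}) \<union> {eab}) (ends(eab := {a, b})) f eab S T"
  shows "\<exists>e2 \<in> {ea, eb}.
           tau3_arc V E ends f e2 (fst (rho eab ea eb ec (S, T))) (snd (rho eab ea eb ec (S, T)))
         \<and> tau3_arc V E ends e2 f
             (fst (arc_head f e2 (fst (rho eab ea eb ec (S, T))) (snd (rho eab ea eb ec (S, T)))))
             (snd (arc_head f e2 (fst (rho eab ea eb ec (S, T))) (snd (rho eab ea eb ec (S, T)))))"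
proof -
  have edges: "{ea, eb, ec} = {ex, ey, ez}" and nbrs: "distinct [a, b, c]" "distinct [ea, eb, ec]"
    and ends_abc: "ends ea = {v, a}" "ends eb = {v, b}" "ends ec = {v, c}"
    using assms(5,6,8-11) by (auto simp: insert_commute)
  interpret vertex_reduction V E ends v a b c ea eb ec eab
  proof unfold_locales
    show "\<And>g. g \<in> E \<Longrightarrow> v \<in> ends g \<Longrightarrow> g \<in> {ea, eb, ec}" using assms(7) edges by blast
  qed (use assms(1,7,12) nbrs ends_abc edges in \<open>auto simp: mgraph_def\<close>)
  have "E - {ex, ey, ez} \<union> {eab} = E_red" using edges by simp
  with assms(13) have "tau3_arc V_red E_red ends_red f eab S T" by simp
  from lift_arc[OF this] obtain e2 where "e2 \<in> {ea, eb}"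
    and arc: "tau3_arc V E ends f e2 (fst (rho eab ea eb ec (S, T))) (snd (rho eab ea eb ec (S, T)))"
    by blast
  with tau3_arc_reverse[OF arc] show ?thesis by blast
qed

end
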